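(* Let $p=a/b$ with $a,b$ positive coprime integers, $0<p<1/2$, and $b\not\equiv 0\pmod 4$; set $k'=b$ if $b$ is even and $k'=2b$ if $b$ is odd (so $k'p=a$ for $b$ even and $k'p=2a$ for $b$ odd). Let $(\Delta_L^{(m)})_{m\ge 1}$ satisfy $\Delta_L^{(m+1)}=\Delta_L^{(m)}+1+2p-2\lceil\Delta_L^{(m)}\rceil$ for all $m\ge1$, with initial value $-1<\Delta_L^{(1)}<1$. Then $$|\Delta_L^{(m)}|<k'p+2\quad\text{for all } m\ge 1 .$$
   Context: $\lceil\cdot\rceil$ denotes the ceiling function. *)

theory Defs
  imports Complex_Main
begin

end

theory Submission
  imports Defs
begin

text \<open>Shift indices so that the sequence starts at \<open>E 0 = \<Delta>\<^sub>L\<^sup>(\<^sup>1\<^sup>)\<close> and put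
  \<open>y n = E 0 + 2np\<close>. By induction, \<open>E n\<close> is an integer \<open>c n\<close> minus the gap
  \<open>\<lceil>y n\<rceil> - y n \<in> [0,1)\<close>, where \<open>c n\<close> is \<open>\<lceil>E 0\<rceil>\<close> or \<open>1 - \<lceil>E 0\<rceil>\<close> corrected by an
  alternating sum of the nonnegative ceiling jumps \<open>\<lceil>y (i+1)\<rceil> - \<lceil>y i\<rceil>\<close>. With \<open>M = b/2\<close>
  resp. \<open>M = b\<close>, which is odd because \<open>4\<close> does not divide \<open>b\<close>, the number \<open>2Mp = k'p\<close> is an
  integer, so the jumps are \<open>M\<close>-periodic with period sum \<open>k'p\<close>. Shifting by an odd period
  flips the sign of the alternating sum, which therefore stays within \<open>k'p\<close> in absolute
  value.\<close>

lemma alternating_sum_shift_odd_period: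
  fixes h :: "nat \<Rightarrow> 'a::comm_ring_1"
  assumes per: "\<And>i. h (i + M) = h i" and "odd M"
  shows "(\<Sum>i<n + M. (-1)^i * h i) = (\<Sum>i<M. (-1)^i * h i) - (\<Sum>i<n. (-1)^i * h i)"
proof (induction n)
  case (Suc n)
  have "(-1::'a)^(n + M) = - ((-1)^n)" using \<open>odd M\<close> by (simp add: power_add)
  with Suc per[of n] show ?case by (simp add: algebra_simps)
qed simp

lemma abs_alternating_sum_le_sum:
  fixes h :: "nat \<Rightarrow> 'a::linordered_idom"
  assumes "\<And>i. h i \<ge> 0" and "I \<subseteq> J" and "finite J"
  shows "\<bar>\<Sum>i\<in>I. (-1)^i * h i\<bar> \<le> (\<Sum>i\<in>J. h i)"
proof -
  have "\<bar>\<Sum>i\<in>I. (-1)^i * h i\<bar> \<le> (\<Sum>i\<in>I. \<bar>(-1)^i * h i\<bar>)" by (rule sum_abs)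
  also have "\<dots> = (\<Sum>i\<in>I. h i)" using assms(1) by (simp add: abs_mult)
  also have "\<dots> \<le> (\<Sum>i\<in>J. h i)" using assms by (intro sum_mono2) auto
  finally show ?thesis .
qed

lemma abs_alternating_sum_odd_period_le:
  fixes h :: "nat \<Rightarrow> 'a::linordered_idom"
  assumes nonneg: "\<And>i. h i \<ge> 0" and per: "\<And>i. h (i + M) = h i" and "odd M"
  shows "\<bar>\<Sum>i<n. (-1)^i * h i\<bar> \<le> (\<Sum>i<M. h i)"
proof (induction n rule: less_induct)
  case (less n)
  note shift = alternating_sum_shift_odd_period[of h M, OF per \<open>odd M\<close>]
  consider "n \<le> M" | n' where "n = n' + M" "n' \<le> M" | n'' where "n = n'' + M + M"
    by (metis add.commute le_add_diff_inverse nat_le_linear)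
  then show ?case
  proof cases
    case 1
    then show ?thesis by (intro abs_alternating_sum_le_sum nonneg) auto
  next
    case (2 n')
    have "(\<Sum>i<M. (-1)^i * h i) = (\<Sum>i<n'. (-1)^i * h i) + (\<Sum>i\<in>{n'..<M}. (-1)^i * h i)"
      using \<open>n' \<le> M\<close> by (metis sum.atLeastLessThan_concat lessThan_atLeast0 zero_le)
    then have "(\<Sum>i<n. (-1)^i * h i) = (\<Sum>i\<in>{n'..<M}. (-1)^i * h i)"
      using shift[of n'] \<open>n = n' + M\<close> by simp
    moreover have "\<bar>\<Sum>i\<in>{n'..<M}. (-1)^i * h i\<bar> \<le> (\<Sum>i<M. h i)"
      by (rule abs_alternating_sum_le_sum[OF nonneg]) auto
    ultimately show ?thesis by simp
  next
    case (3 n'')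
    then have "(\<Sum>i<n. (-1)^i * h i) = (\<Sum>i<n''. (-1)^i * h i)"
      using shift[of "n'' + M"] shift[of n''] by simp
    moreover have "n'' < n" using \<open>n = n'' + M + M\<close> \<open>odd M\<close> by (cases M) auto
    ultimately show ?thesis using less by simp
  qed
qed

definition ceiling_jump :: "real \<Rightarrow> real \<Rightarrow> nat \<Rightarrow> int" where
  "ceiling_jump x d i = \<lceil>x + real (Suc i) * d\<rceil> - \<lceil>x + real i * d\<rceil>"

lemma ceiling_jump_nonneg: "d \<ge> 0 \<Longrightarrow> ceiling_jump x d i \<ge> 0"
  unfolding ceiling_jump_def by (simp add: ceiling_mono distrib_right)

lemma ceiling_jump_periodic:
  assumes "real M * d = of_int K"
  shows "ceiling_jump x d (i + M) = ceiling_jump x d i"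
proof -
  have "\<lceil>x + real (j + M) * d\<rceil> = \<lceil>x + real j * d\<rceil> + K" for j
  proof -
    have "x + real (j + M) * d = (x + real j * d) + of_int K"
      using assms by (simp add: algebra_simps)
    then show ?thesis by (simp only: ceiling_add_of_int)
  qed
  from this[of i] this[of "Suc i"] show ?thesis
    unfolding ceiling_jump_def by simp
qed

lemma sum_ceiling_jump:
  assumes "real M * d = of_int K"
  shows "(\<Sum>i<M. ceiling_jump x d i) = K"
proof -
  have "(\<Sum>i<M. ceiling_jump x d i) = \<lceil>x + real M * d\<rceil> - \<lceil>x + real 0 * d\<rceil>"
    unfolding ceiling_jump_def by (rule sum_lessThan_telescope)
  then show ?thesis using assms by (simp add: ceiling_add_of_int)
qed

lemma ceiling_recurrence_closed_form:
  fixes E :: "nat \<Rightarrow> real"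
  assumes rec: "\<And>n. E (Suc n) = E n + 1 + 2 * p - 2 * of_int \<lceil>E n\<rceil>"
  defines "y n \<equiv> E 0 + real n * (2 * p)"
    and "A n \<equiv> (\<Sum>i<n. (-1)^i * ceiling_jump (E 0) (2 * p) i)"
  shows "E n = of_int (if even n then \<lceil>E 0\<rceil> - A n else 1 - \<lceil>E 0\<rceil> + A n)
              - (of_int \<lceil>y n\<rceil> - y n)"
proof (induction n)
  case (Suc n)
  define c where "c = (if even n then \<lceil>E 0\<rceil> - A n else 1 - \<lceil>E 0\<rceil> + A n)"
  define h where "h = ceiling_jump (E 0) (2 * p) n"
  have "\<lceil>E n\<rceil> = c"
    using Suc le_of_int_ceiling[of "y n"] ceiling_correct[of "y n"]
    by (intro ceiling_unique) (simp_all add: c_def)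
  moreover have "(if even (Suc n) then \<lceil>E 0\<rceil> - A (Suc n) else 1 - \<lceil>E 0\<rceil> + A (Suc n))
      = 1 - c + h"
    by (simp add: c_def h_def A_def)
  moreover have "\<lceil>y (Suc n)\<rceil> = \<lceil>y n\<rceil> + h" and "y (Suc n) = y n + 2 * p"
    by (simp_all add: h_def ceiling_jump_def y_def algebra_simps)
  ultimately show ?case using rec[of n] Suc by (simp add: c_def)
qed (simp add: y_def A_def)

lemma ceiling_recurrence_bound:
  fixes E :: "nat \<Rightarrow> real" and M K :: nat
  assumes rec: "\<And>n. E (Suc n) = E n + 1 + 2 * p - 2 * of_int \<lceil>E n\<rceil>"
    and "odd M" and MK: "2 * real M * p = real K"
    and "-1 < E 0" and "E 0 < 1"
  shows "\<bar>E n\<bar> < real K + 2"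
proof -
  define y where "y = E 0 + real n * (2 * p)"
  define A where "A = (\<Sum>i<n. (-1)^i * ceiling_jump (E 0) (2 * p) i)"
  have period: "real M * (2 * p) = of_int (int K)" using MK by simp
  have "p \<ge> 0"
  proof -
    have "0 < 2 * real M" using \<open>odd M\<close> by (cases M) auto
    moreover have "0 \<le> 2 * real M * p" using MK by simp
    ultimately show ?thesis by (simp add: zero_le_mult_iff)
  qed
  have "\<bar>A\<bar> \<le> int K"
    unfolding A_def
    using abs_alternating_sum_odd_period_le[of "ceiling_jump (E 0) (2 * p)",
        OF ceiling_jump_nonneg ceiling_jump_periodic[OF period] \<open>odd M\<close>]
      \<open>p \<ge> 0\<close> sum_ceiling_jump[OF period]
    by simp
  moreover have "\<lceil>E 0\<rceil> = 0 \<or> \<lceil>E 0\<rceil> = 1"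
  proof -
    have "-1 < \<lceil>E 0\<rceil>" "\<lceil>E 0\<rceil> < 2"
      using \<open>-1 < E 0\<close> \<open>E 0 < 1\<close> by (simp_all add: less_ceiling_iff ceiling_less_iff)
    then show ?thesis by linarith
  qed
  moreover define c where "c = (if even n then \<lceil>E 0\<rceil> - A else 1 - \<lceil>E 0\<rceil> + A)"
  ultimately have "- int K - 1 \<le> c" "c \<le> int K + 1"
    by (auto simp: abs_le_iff)
  moreover have "E n = of_int c - (of_int \<lceil>y\<rceil> - y)"
    unfolding c_def A_def y_def by (rule ceiling_recurrence_closed_form[of E p, OF rec])
  moreover have "0 \<le> of_int \<lceil>y\<rceil> - y" "of_int \<lceil>y\<rceil> - y < 1"
    using le_of_int_ceiling[of y] ceiling_correct[of y] by linarith+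
  ultimately show ?thesis by linarith
qed

theorem lemma4:
  fixes a b :: nat and D :: "nat \<Rightarrow> real"
  assumes "a > 0" and "b > 0" and "coprime a b"
    and "real a / real b < 1/2"
    and "\<not> (4 dvd b)"
    and "\<And>m. m \<ge> 1 \<Longrightarrow>
           D (m + 1) = D m + 1 + 2 * (real a / real b) - 2 * of_int \<lceil>D m\<rceil>"
    and "-1 < D 1" and "D 1 < 1"
  shows "\<forall>m\<ge>1. \<bar>D m\<bar> <
           real (if even b then b else 2 * b) * (real a / real b) + 2"
proof (intro allI impI)
  fix m :: nat assume "m \<ge> 1"
  define M where "M = (if even b then b div 2 else b)"
  define K where "K = (if even b then a else 2 * a)"
  have "odd M" using \<open>\<not> 4 dvd b\<close> by (auto simp: M_def elim!: evenE)
  have MK: "2 * real M * (real a / real b) = real K"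
    and K_eq: "real (if even b then b else 2 * b) * (real a / real b) = real K"
    using \<open>b > 0\<close> by (auto simp: M_def K_def real_of_nat_div elim!: evenE)
  have rec: "D (Suc n + 1) = D (n + 1) + 1 + 2 * (real a / real b) - 2 * of_int \<lceil>D (n + 1)\<rceil>"
    for n using assms(6)[of "n + 1"] by simp
  have "\<bar>D (m - 1 + 1)\<bar> < real K + 2"
    using ceiling_recurrence_bound[where E = "\<lambda>n. D (n + 1)", OF rec \<open>odd M\<close> MK] assms(7,8)
    by simp
  then show "\<bar>D m\<bar> < real (if even b then b else 2 * b) * (real a / real b) + 2"
    using \<open>m \<ge> 1\<close> K_eq by simp
qed

end
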